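(* Let $X$ be a uniform space equipped with a uniformly continuous action of a group $\Gamma$. Let $Y$ be a closed subset of $X$. Suppose that there is a net $(Z_i)_{i \in I}$ of $\Gamma$-invariant subsets of $X$ converging to $Y$ in the Hausdorff-Bourbaki topology. Then $Y$ is $\Gamma$-invariant.
   Context: An action of $\Gamma$ on $X$ is uniformly continuous if each map $x \mapsto \gamma x$, $\gamma \in \Gamma$, is uniformly continuous. For $V \subset X \times X$ and $A \subset X$, $V[A] = \{x \in X : (x,a) \in V \text{ for some } a \in A\}$. The Hausdorff-Bourbaki uniform structure on the set $\mathcal{P}(X)$ of all subsets of $X$ has as a base the sets $\widehat{V} = \{(A,B) : B \subset V[A] \text{ and } A \subset V[B]\}$, $V$ an entourage of $X$; the Hausdorff-Bourbaki topology is its associated topology. *)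

theory Defs
  imports "HOL-Analysis.Analysis" "HOL-Algebra.Group_Action"
begin

definition entourage :: "('a::uniform_space \<times> 'a) set \<Rightarrow> bool" where
  "entourage V \<longleftrightarrow> eventually (\<lambda>p. p \<in> V) uniformity"

definition ent_image :: "('a \<times> 'a) set \<Rightarrow> 'a set \<Rightarrow> 'a set" where
  "ent_image V A = {x. \<exists>a\<in>A. (x, a) \<in> V}"

definition HB_ent :: "('a \<times> 'a) set \<Rightarrow> ('a set \<times> 'a set) set" where
  "HB_ent V = {(A, B). B \<subseteq> ent_image V A \<and> A \<subseteq> ent_image V B}"

definition directed_set :: "'i set \<Rightarrow> ('i \<Rightarrow> 'i \<Rightarrow> bool) \<Rightarrow> bool" where
  "directed_set I ord_rel \<longleftrightarrow> I \<noteq> {} \<and> (\<forall>i\<in>I. ord_rel i i)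
     \<and> (\<forall>i\<in>I. \<forall>j\<in>I. \<forall>k\<in>I. ord_rel i j \<longrightarrow> ord_rel j k \<longrightarrow> ord_rel i k)
     \<and> (\<forall>i\<in>I. \<forall>j\<in>I. \<exists>k\<in>I. ord_rel i k \<and> ord_rel j k)"

definition HB_net_converges ::
    "'i set \<Rightarrow> ('i \<Rightarrow> 'i \<Rightarrow> bool) \<Rightarrow> ('i \<Rightarrow> 'a::uniform_space set) \<Rightarrow> 'a set \<Rightarrow> bool" where
  "HB_net_converges I ord_rel Z Y \<longleftrightarrow>
     (\<forall>V. entourage V \<longrightarrow> (\<exists>i0\<in>I. \<forall>i\<in>I. ord_rel i0 i \<longrightarrow> (Y, Z i) \<in> HB_ent V))"

definition invariant_set :: "('g, 'b) monoid_scheme \<Rightarrow> ('g \<Rightarrow> 'a \<Rightarrow> 'a) \<Rightarrow> 'a set \<Rightarrow> bool" where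
  "invariant_set G \<phi> Z \<longleftrightarrow> (\<forall>g\<in>carrier G. \<phi> g ` Z \<subseteq> Z)"

end

theory Submission
  imports Defs
begin

text \<open>Let \<open>y \<in> Y\<close> and \<open>g \<in> \<Gamma>\<close>. For a small entourage \<open>V\<close>, pick an invariant \<open>Z\<close> that is
  \<open>V\<close>-close to \<open>Y\<close>: then \<open>y\<close> is \<open>V\<close>-close to some \<open>z \<in> Z\<close>, so by uniform continuity \<open>g y\<close> is
  close to \<open>g z \<in> Z\<close>, which in turn is \<open>V\<close>-close to a point of \<open>Y\<close>. Hence \<open>g y\<close> lies in
  every uniform neighbourhood of \<open>Y\<close>, i.e. in its closure, which is \<open>Y\<close>.\<close>

lemma entourage_Int:
  assumes "entourage U" and "entourage V"
  shows "entourage (U \<inter> V)"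
  using assms eventually_conj unfolding entourage_def by auto

lemma entourage_vimage_uniformly_continuous:
  assumes "uniformly_continuous_on UNIV f" and "entourage V"
  shows "entourage {(a, b). (f a, f b) \<in> V}"
proof -
  have "filterlim (\<lambda>(a, b). (f a, f b)) uniformity uniformity"
    using assms(1) unfolding uniformly_continuous_on_uniformity by simp
  from filterlim_iff[THEN iffD1, OF this, rule_format, of "\<lambda>p. p \<in> V"]
  show ?thesis
    using assms(2) unfolding entourage_def by (simp add: case_prod_unfold)
qed

lemma entourage_comp_subset:
  assumes "entourage V"
  obtains W where "entourage W" and "\<And>x y z. (x, y) \<in> W \<Longrightarrow> (y, z) \<in> W \<Longrightarrow> (x, z) \<in> V"
proof -
  obtain D where "eventually D uniformity" and "\<And>x y z. D (x, y) \<Longrightarrow> D (y, z) \<Longrightarrow> (x, z) \<in> V"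
    using assms uniformity_transE unfolding entourage_def by metis
  then show ?thesis
    using that[of "Collect D"] unfolding entourage_def by auto
qed

lemma in_closure_if_in_ent_images:
  assumes "\<And>V. entourage V \<Longrightarrow> x \<in> ent_image V A"
  shows "x \<in> closure A"
proof (rule ccontr)
  assume "x \<notin> closure A"
  then have "entourage {(x', y). x' = x \<longrightarrow> y \<notin> closure A}"
    using open_uniformity[of "- closure A"] unfolding entourage_def by auto
  then obtain a where "a \<in> A" and "a \<notin> closure A"
    using assms unfolding ent_image_def by blast
  then show False
    using closure_subset by blast
qed

lemma HB_net_converges_obtain:
  assumes "directed_set I ord_rel" and "HB_net_converges I ord_rel Z Y" and "entourage V"
  obtains i where "i \<in> I" and "(Y, Z i) \<in> HB_ent V"
proof -
  obtain i where "i \<in> I" and "\<forall>j\<in>I. ord_rel i j \<longrightarrow> (Y, Z j) \<in> HB_ent V"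
    using assms(2,3) unfolding HB_net_converges_def by blast
  moreover have "ord_rel i i"
    using assms(1) \<open>i \<in> I\<close> unfolding directed_set_def by blast
  ultimately show thesis
    using that by blast
qed

lemma image_subset_closure_if_HB_approximated_by_invariant:
  fixes f :: "'a::uniform_space \<Rightarrow> 'a"
  assumes f: "uniformly_continuous_on UNIV f"
    and approx: "\<And>V. entourage V \<Longrightarrow> \<exists>Z. f ` Z \<subseteq> Z \<and> (Y, Z) \<in> HB_ent V"
  shows "f ` Y \<subseteq> closure Y"
proof (intro image_subsetI in_closure_if_in_ent_images)
  fix y and V :: "('a \<times> 'a) set"
  assume "y \<in> Y" and "entourage V"
  then obtain W where W: "entourage W" and W_comp: "\<And>x y z. (x, y) \<in> W \<Longrightarrow> (y, z) \<in> W \<Longrightarrow> (x, z) \<in> V"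
    using entourage_comp_subset by blast
  define U where "U = W \<inter> {(a, b). (f a, f b) \<in> W}"
  have "entourage U"
    unfolding U_def using W f entourage_Int entourage_vimage_uniformly_continuous by blast
  then obtain Z where Z_inv: "f ` Z \<subseteq> Z" and YZ: "(Y, Z) \<in> HB_ent U"
    using approx by blast
  obtain z where "z \<in> Z" and yz: "(y, z) \<in> U"
    using YZ \<open>y \<in> Y\<close> unfolding HB_ent_def ent_image_def by blast
  then have "f z \<in> Z"
    using Z_inv by blast
  then obtain y' where "y' \<in> Y" and "(f z, y') \<in> U"
    using YZ unfolding HB_ent_def ent_image_def by blast
  moreover have "(f y, f z) \<in> W"
    using yz unfolding U_def by simp
  ultimately show "f y \<in> ent_image V Y"
    unfolding U_def ent_image_def using W_comp by blast
qed

theorem corollary3p7: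
  fixes G :: "('g, 'b) monoid_scheme"
    and \<phi> :: "'g \<Rightarrow> 'a::uniform_space \<Rightarrow> 'a"
    and Y :: "'a set"
    and I :: "'i set" and ord_rel :: "'i \<Rightarrow> 'i \<Rightarrow> bool"
    and Z :: "'i \<Rightarrow> 'a set"
  assumes "group_action G UNIV \<phi>"
    and "\<forall>g\<in>carrier G. uniformly_continuous_on UNIV (\<phi> g)"
    and "closed Y"
    and "directed_set I ord_rel"
    and "\<forall>i\<in>I. invariant_set G \<phi> (Z i)"
    and "HB_net_converges I ord_rel Z Y"
  shows "invariant_set G \<phi> Y"
  unfolding invariant_set_def
proof
  fix g assume g: "g \<in> carrier G"
  have "\<exists>Z'. \<phi> g ` Z' \<subseteq> Z' \<and> (Y, Z') \<in> HB_ent V" if "entourage V" for V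
  proof -
    obtain i where "i \<in> I" and "(Y, Z i) \<in> HB_ent V"
      using HB_net_converges_obtain assms(4,6) \<open>entourage V\<close> .
    then show ?thesis
      using assms(5) g unfolding invariant_set_def by blast
  qed
  then have "\<phi> g ` Y \<subseteq> closure Y"
    using image_subset_closure_if_HB_approximated_by_invariant assms(2) g by blast
  then show "\<phi> g ` Y \<subseteq> Y"
    using assms(3) by (simp add: closure_closed)
qed

end
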